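(* Let $g\geqslant0$ be even. With respect to the lexicographic monomial order with $\alpha>\gamma$, the set \[\{\zeta^-_g,\ \gamma\zeta^-_{g-2},\ \gamma^2\zeta^-_{g-4},\ \ldots,\ \gamma^{g/2-1}\zeta^-_2,\ \gamma^{g/2}\}\] is a Gröbner basis for the ideal $J_g^-=J_{g+1}^-$. Consequently, the initial ideal of $J_g^-$ is generated by the monomials $\gamma^i\alpha^{g-2i}$, $0\leqslant i\leqslant g/2$, and the monomials $\alpha^a\gamma^c$ with $0\leqslant c<g/2$ and $0\leqslant a<g-2c$ represent a vector space basis of $\mathbb{C}[\alpha,\gamma]/J_g^-$.
   Context: $\zeta_k^-\in\mathbb{C}[\alpha,\gamma]$: $\zeta^-_i=0$ for $i<0$, $\zeta^-_0=1$, $\zeta^-_{k+1}=\alpha\zeta^-_k-16k^2\zeta^-_{k-1}+2k(k-1)\gamma\zeta^-_{k-2}$ for $k$ odd and $\zeta^-_{k+1}=\alpha\zeta^-_k+2k(k-1)\gamma\zeta^-_{k-2}$ for $k$ even ($k\geqslant0$); $J^-_k=(\zeta^-_k,\zeta^-_{k+1},\zeta^-_{k+2})$. *)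

theory Defs
  imports "HOL-Computational_Algebra.Polynomial"
begin

text \<open>The bivariate polynomial ring C[alpha, gamma] is represented as
  complex poly poly: the outer variable is alpha, the inner variable is gamma.
  Thus a polynomial is sum_a p_a(gamma) alpha^a.\<close>

definition alpha :: "complex poly poly" where
  "alpha = monom 1 1"

definition gamma :: "complex poly poly" where
  "gamma = monom (monom 1 1) 0"

definition mon :: "nat \<Rightarrow> nat \<Rightarrow> complex poly poly" where
  "mon a c = monom (monom 1 c) a"

text \<open>zeta^-_k; negative indices are 0.  In the recursion the terms with
  (truncated) index k-1, k-2 for small k carry a zero coefficient, so the
  natural-number truncation is harmless.\<close>
fun zeta :: "nat \<Rightarrow> complex poly poly" where
  "zeta 0 = 1"
| "zeta (Suc k) = alpha * zeta k
     - (if odd k then of_nat (16 * k^2) * zeta (k - 1) else 0)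
     + of_nat (2 * k * (k - 1)) * gamma * zeta (k - 2)"

definition is_ideal :: "'a::comm_ring_1 set \<Rightarrow> bool" where
  "is_ideal I \<longleftrightarrow> 0 \<in> I \<and> (\<forall>x\<in>I. \<forall>y\<in>I. x + y \<in> I) \<and> (\<forall>r. \<forall>x\<in>I. r * x \<in> I)"

definition gen_ideal :: "'a::comm_ring_1 set \<Rightarrow> 'a set" where
  "gen_ideal S = \<Inter> {I. is_ideal I \<and> S \<subseteq> I}"

definition J :: "nat \<Rightarrow> complex poly poly set" where
  "J k = gen_ideal {zeta k, zeta (k + 1), zeta (k + 2)}"

text \<open>Leading monomial w.r.t. the lexicographic order with alpha > gamma:
  alpha^a gamma^c is compared via (a, c) lexicographically, so the leading
  monomial of p \<noteq> 0 is alpha^(deg_alpha p) gamma^(deg of the leading alpha-coefficient).\<close>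
definition lex_lead_mon :: "complex poly poly \<Rightarrow> complex poly poly" where
  "lex_lead_mon p = mon (degree p) (degree (lead_coeff p))"

definition initial_ideal :: "complex poly poly set \<Rightarrow> complex poly poly set" where
  "initial_ideal I = gen_ideal {lex_lead_mon f | f. f \<in> I \<and> f \<noteq> 0}"

definition is_groebner_basis :: "complex poly poly set \<Rightarrow> complex poly poly set \<Rightarrow> bool" where
  "is_groebner_basis G I \<longleftrightarrow> G \<subseteq> I \<and>
     gen_ideal (lex_lead_mon ` (G - {0})) = initial_ideal I"

end

theory Submission
  imports Defs
begin

text \<open>Write \<open>g = 2h\<close>. The recursion of \<open>\<zeta>\<close> shows \<open>J\<^sub>2\<^sub>h = (\<zeta>\<^sub>2\<^sub>h) + \<gamma> J\<^sub>2\<^sub>h\<^sub>-\<^sub>2\<close>, so \<open>J\<^sub>2\<^sub>h\<close> is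
  generated by the \<open>\<gamma>\<^sup>i\<zeta>\<^sub>2\<^sub>h\<^sub>-\<^sub>2\<^sub>i\<close>, whose leading monomials are \<open>\<alpha>\<^sup>2\<^sup>h\<^sup>-\<^sup>2\<^sup>i\<gamma>\<^sup>i\<close>.
  Since \<open>\<zeta>\<^sub>k\<close> has \<open>\<alpha>\<close>-degree \<open>k\<close> also after setting \<open>\<gamma> = 0\<close>, an element of \<open>J\<^sub>2\<^sub>h\<close> of
  \<open>\<alpha>\<close>-degree below \<open>2h\<close> is divisible by \<open>\<gamma>\<close>; by induction no nonzero element has its leading
  monomial in the staircase \<open>c < h, a + 2c < 2h\<close>. Conversely every monomial outside the staircase
  reduces modulo these generators, which gives the initial ideal, the Groebner basis and the
  normal forms at once.

  For \<open>J\<^sub>2\<^sub>h = J\<^sub>2\<^sub>h\<^sub>+\<^sub>1\<close> it suffices to show \<open>\<zeta>\<^sub>2\<^sub>h \<in> J\<^sub>2\<^sub>h\<^sub>+\<^sub>1\<close>. Running the recursion downwards expresses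
  \<open>\<gamma>\<^sup>j\<zeta>\<^sub>2\<^sub>h\<^sub>-\<^sub>2\<^sub>j\<close> and \<open>\<gamma>\<^sup>j\<zeta>\<^sub>2\<^sub>h\<^sub>-\<^sub>2\<^sub>j\<^sub>+\<^sub>1\<close> modulo \<open>J\<^sub>2\<^sub>h\<^sub>+\<^sub>1\<close> as real polynomials in \<open>\<alpha>\<close> times \<open>\<zeta>\<^sub>2\<^sub>h\<close>;
  at \<open>j = h\<close> this puts a polynomial \<open>u(\<alpha>)\<close> into the ideal quotient \<open>(J\<^sub>2\<^sub>h\<^sub>+\<^sub>1 : \<zeta>\<^sub>2\<^sub>h)\<close>.
  That quotient also contains \<open>\<zeta>\<^sub>2\<^sub>h\<close> and \<open>\<gamma>\<close>, hence \<open>\<zeta>\<^sub>2\<^sub>h\<close> at \<open>\<gamma> = 0\<close>, which is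
  \<open>\<Prod>\<^sub>l\<^sub><\<^sub>h (\<alpha>\<^sup>2 - 16(2l+1)\<^sup>2)\<close>. A sign pattern of the coefficients of the downward recursion
  shows that \<open>u\<close> has no nonzero real root, so the two are coprime and the quotient is the
  unit ideal.\<close>

section \<open>Ideals and polynomial maps\<close>

lemma is_idealD:
  assumes "is_ideal I"
  shows ideal_zero: "0 \<in> I" and ideal_add: "x \<in> I \<Longrightarrow> y \<in> I \<Longrightarrow> x + y \<in> I"
    and ideal_mult_left: "x \<in> I \<Longrightarrow> r * x \<in> I"
  using assms unfolding is_ideal_def by auto

lemma ideal_mult_right: "is_ideal I \<Longrightarrow> x \<in> I \<Longrightarrow> x * r \<in> I"
  using ideal_mult_left[of I x r] by (simp add: mult.commute)

lemma ideal_diff: "is_ideal I \<Longrightarrow> x \<in> I \<Longrightarrow> y \<in> I \<Longrightarrow> x - y \<in> I"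
  using ideal_add[of I x "-1 * y"] ideal_mult_left[of I y "-1"] by simp

lemma ideal_cancel_unit: "is_ideal I \<Longrightarrow> c dvd 1 \<Longrightarrow> c * x \<in> I \<Longrightarrow> x \<in> I"
proof -
  assume I: "is_ideal I" and "c dvd 1" and cx: "c * x \<in> I"
  then obtain k where "1 = c * k" by blast
  then have "x = k * (c * x)" by (metis mult.assoc mult.commute mult_1)
  with ideal_mult_left[OF I cx, of k] show "x \<in> I" by simp
qed

lemma ideal_eq_UNIV: "is_ideal I \<Longrightarrow> 1 \<in> I \<Longrightarrow> I = UNIV"
  using ideal_mult_left[of I 1] by auto

lemma is_ideal_UNIV: "is_ideal UNIV"
  unfolding is_ideal_def by auto

lemma is_ideal_quotient: "is_ideal I \<Longrightarrow> is_ideal {y. u * y \<in> I}"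
  unfolding is_ideal_def by (auto simp: algebra_simps)

lemma is_ideal_gen_ideal: "is_ideal (gen_ideal S)"
  unfolding gen_ideal_def is_ideal_def by auto

lemma gen_ideal_superset: "S \<subseteq> gen_ideal S"
  unfolding gen_ideal_def by auto

lemma gen_ideal_least: "is_ideal I \<Longrightarrow> S \<subseteq> I \<Longrightarrow> gen_ideal S \<subseteq> I"
  unfolding gen_ideal_def by auto

text \<open>Since \<open>u \<equiv> u(c)\<close> modulo \<open>X - c\<close>, the ideal contains \<open>u(c) y\<close>.\<close>
lemma ideal_cancel_linear_factor:
  fixes L :: "'a::comm_ring_1 poly set"
  assumes L: "is_ideal L" and u: "u \<in> L" "poly u c dvd 1" and y: "[:-c, 1:] * y \<in> L"
  shows "y \<in> L"
proof (rule ideal_cancel_unit[OF L])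
  from u(2) obtain k where "1 = poly u c * k" by (rule dvdE)
  then have "1 = [:poly u c:] * [:k:]" by (simp add: one_pCons mult.commute)
  then show "[:poly u c:] dvd 1" by (rule dvdI)
  have "[:poly u c:] = u - [:-c, 1:] * synthetic_div u c"
    using synthetic_div_correct'[of c u] by (metis add_diff_cancel_left')
  then have "[:poly u c:] * y = u * y - synthetic_div u c * ([:-c, 1:] * y)"
    by (simp only: left_diff_distrib right_diff_distrib mult_ac)
  also have "\<dots> \<in> L" by (rule ideal_diff[OF L ideal_mult_right[OF L u(1)] ideal_mult_left[OF L y]])
  finally show "[:poly u c:] * y \<in> L" .
qed

lemma ideal_cancel_linear_factors:
  fixes L :: "'a::comm_ring_1 poly set"
  assumes L: "is_ideal L" and u: "u \<in> L" "\<forall>c\<in>set cs. poly u c dvd 1"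
    and y: "prod_list (map (\<lambda>c. [:-c, 1:]) cs) * y \<in> L"
  shows "y \<in> L"
  using u(2) y
proof (induction cs arbitrary: y)
  case Nil
  then show ?case by (simp only: list.map prod_list.Nil mult_1_left)
next
  case (Cons c cs)
  have c: "poly u c dvd 1" and cs: "\<forall>c\<in>set cs. poly u c dvd 1"
    using Cons.prems(1) by simp_all
  have "[:-c, 1:] * (prod_list (map (\<lambda>c. [:-c, 1:]) cs) * y) \<in> L"
    using Cons.prems(2) by (simp only: list.map prod_list.Cons mult.assoc)
  then have "prod_list (map (\<lambda>c. [:-c, 1:]) cs) * y \<in> L"
    by (rule ideal_cancel_linear_factor[OF L u(1) c])
  with cs show ?case by (rule Cons.IH)
qed

lemma map_poly_add_hom:
  assumes "f 0 = 0" "\<And>x y. f (x + y) = f x + f y"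
  shows "map_poly f (p + q) = map_poly f p + map_poly f q"
  by (rule poly_eqI) (simp add: coeff_map_poly assms)

lemma map_poly_diff_hom:
  fixes f :: "'a::comm_ring \<Rightarrow> 'b::comm_ring"
  assumes "f 0 = 0" "\<And>x y. f (x - y) = f x - f y"
  shows "map_poly f (p - q) = map_poly f p - map_poly f q"
  by (rule poly_eqI) (simp add: coeff_map_poly assms)

lemma map_poly_mult_hom:
  fixes f :: "'a::comm_semiring_1 \<Rightarrow> 'b::comm_semiring_1"
  assumes f: "f 0 = 0" "\<And>x y. f (x + y) = f x + f y" "\<And>x y. f (x * y) = f x * f y"
  shows "map_poly f (p * q) = map_poly f p * map_poly f q"
proof (induction p)
  case (pCons a p)
  have "map_poly f (pCons a p * q) = map_poly f (smult a q) + map_poly f (pCons 0 (p * q))"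
    by (simp add: map_poly_add_hom f)
  also have "\<dots> = map_poly f (pCons a p) * map_poly f q"
    using pCons.IH by (simp add: map_poly_smult map_poly_pCons f)
  finally show ?case .
qed simp

section \<open>The polynomials \<open>\<zeta>\<^sub>k\<close> and the ideals \<open>J\<^sub>k\<close>\<close>

declare zeta.simps(2) [simp del]

lemma alpha_mult: "alpha * p = pCons 0 p"
  by (simp add: alpha_def monom_Suc)

lemma gamma_mult: "gamma * p = smult [:0, 1:] p"
  by (simp add: gamma_def monom_Suc monom_0)

lemma alpha_power: "alpha ^ k = monom 1 k"
  by (simp add: alpha_def monom_power)

lemma gamma_power_mult: "gamma ^ i * p = smult (monom 1 i) p"
  by (induction i) (simp_all add: gamma_mult mult.assoc monom_Suc)

lemma mon_mult: "mon a c * mon a' c' = mon (a + a') (c + c')"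
  unfolding mon_def by (simp add: mult_monom)

lemma of_nat_bipoly_dvd_one: "n \<noteq> 0 \<Longrightarrow> (of_nat n :: complex poly poly) dvd 1"
  by (simp add: of_nat_poly is_unit_const_poly_iff dvd_field_iff)

lemma degree_of_nat_mult_le: "degree ((of_nat n :: complex poly poly) * p) \<le> degree p"
  by (metis degree_mult_le degree_of_nat add_0)

lemma degree_gamma_mult: "degree (gamma * p) = degree p"
  by (simp add: gamma_mult)

lemma zeta_Suc_even:
  "even k \<Longrightarrow> zeta (Suc k) = alpha * zeta k + of_nat (2 * k * (k - 1)) * gamma * zeta (k - 2)"
  by (simp add: zeta.simps(2))

lemma zeta_Suc_odd:
  "odd k \<Longrightarrow> zeta (Suc k) = alpha * zeta k - of_nat (16 * k^2) * zeta (k - 1)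
     + of_nat (2 * k * (k - 1)) * gamma * zeta (k - 2)"
  by (simp add: zeta.simps(2))

lemma zeta_1: "zeta 1 = alpha"
  using zeta_Suc_even[of 0] by simp

lemma degree_zeta_le_and_coeff: "degree (zeta k) \<le> k \<and> coeff (zeta k) k = 1"
proof (induction k rule: less_induct)
  case (less k)
  show ?case
  proof (cases k)
    case (Suc n)
    have IH: "degree (zeta j) \<le> j" if "j \<le> n" for j
      using less[of j] that Suc by simp
    let ?T1 = "(if odd n then of_nat (16 * n^2) * zeta (n - 1) else 0) :: complex poly poly"
    let ?T2 = "of_nat (2 * n * (n - 1)) * gamma * zeta (n - 2) :: complex poly poly"
    have z: "zeta k = pCons 0 (zeta n) - ?T1 + ?T2"
      using Suc by (simp add: zeta.simps(2) alpha_mult)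
    have d1: "degree ?T1 \<le> n - 1"
      using order.trans[OF degree_of_nat_mult_le IH[of "n - 1"]] by (simp del: of_nat_mult of_nat_power)
    have "degree ?T2 \<le> degree (gamma * zeta (n - 2))"
      unfolding mult.assoc by (rule degree_of_nat_mult_le)
    then have d2: "degree ?T2 \<le> n - 2"
      using IH[of "n - 2"] by (simp only: degree_gamma_mult diff_le_self order.trans)
    have "degree (pCons 0 (zeta n)) \<le> k" using IH[of n] Suc by (simp add: degree_pCons_le)
    then have "degree (zeta k) \<le> k"
      unfolding z using d1 d2 Suc by (intro degree_add_le degree_diff_le) auto
    moreover have "coeff ?T1 k = 0" "coeff ?T2 k = 0"
      using d1 d2 Suc by (auto intro: coeff_eq_0)
    then have "coeff (zeta k) k = coeff (zeta n) n" unfolding z using Suc by simp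
    ultimately show ?thesis using less[of n] Suc by simp
  qed simp
qed

lemma degree_zeta: "degree (zeta k) = k"
  using degree_zeta_le_and_coeff[of k] by (metis le_antisym le_degree one_neq_zero)

lemma lead_coeff_zeta: "lead_coeff (zeta k) = 1"
  using degree_zeta_le_and_coeff[of k] by (simp add: degree_zeta)

lemma zeta_nonzero: "zeta k \<noteq> 0"
  using lead_coeff_zeta[of k] by auto

lemma degree_zeta_minus_alpha_power: "0 < k \<Longrightarrow> degree (zeta k - alpha ^ k) < k"
proof -
  assume "0 < k"
  have "degree (zeta k - alpha ^ k) \<le> k"
    by (rule degree_diff_le) (simp_all add: degree_zeta alpha_power degree_monom_le)
  moreover have "coeff (zeta k - alpha ^ k) k = 0"
    using lead_coeff_zeta[of k] by (simp add: degree_zeta alpha_power)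
  ultimately show ?thesis using \<open>0 < k\<close>
    by (metis le_neq_implies_less leading_coeff_0_iff degree_0)
qed

definition eval_gamma0 :: "complex poly poly \<Rightarrow> complex poly" where
  "eval_gamma0 p = map_poly (\<lambda>q. poly q 0) p"

lemma coeff_eval_gamma0: "coeff (eval_gamma0 p) n = poly (coeff p n) 0"
  by (simp add: eval_gamma0_def coeff_map_poly)

lemma eval_gamma0_add: "eval_gamma0 (p + q) = eval_gamma0 p + eval_gamma0 q"
  unfolding eval_gamma0_def by (rule map_poly_add_hom) simp_all

lemma eval_gamma0_mult: "eval_gamma0 (p * q) = eval_gamma0 p * eval_gamma0 q"
  unfolding eval_gamma0_def by (rule map_poly_mult_hom) simp_all

lemma eval_gamma0_gamma: "eval_gamma0 gamma = 0"
  by (rule poly_eqI) (simp add: coeff_eval_gamma0 gamma_def coeff_monom poly_monom)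

lemma degree_eval_gamma0_le: "degree (eval_gamma0 p) \<le> degree p"
  unfolding eval_gamma0_def by (rule map_poly_degree_leq)

lemma gamma_dvd_iff_eval_gamma0: "gamma dvd p \<longleftrightarrow> eval_gamma0 p = 0"
proof -
  have "gamma dvd p \<longleftrightarrow> (\<forall>n. [:0, 1:] dvd coeff p n)"
    by (simp add: gamma_def monom_Suc monom_0 const_poly_dvd_iff)
  also have "\<dots> \<longleftrightarrow> (\<forall>n. poly (coeff p n) 0 = 0)"
    using poly_eq_0_iff_dvd[of _ "0::complex"] by simp
  also have "\<dots> \<longleftrightarrow> eval_gamma0 p = 0"
    by (simp add: poly_eq_iff coeff_eval_gamma0)
  finally show ?thesis .
qed

lemma degree_eval_gamma0_zeta: "degree (eval_gamma0 (zeta k)) = k"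
  and eval_gamma0_zeta_nonzero: "eval_gamma0 (zeta k) \<noteq> 0"
proof -
  have "coeff (eval_gamma0 (zeta k)) k = 1"
    using lead_coeff_zeta[of k] by (simp add: coeff_eval_gamma0 degree_zeta)
  then show "degree (eval_gamma0 (zeta k)) = k" "eval_gamma0 (zeta k) \<noteq> 0"
    using degree_eval_gamma0_le[of "zeta k"]
    by (metis degree_zeta le_antisym le_degree one_neq_zero, auto)
qed

lemma is_ideal_J: "is_ideal (J k)"
  unfolding J_def by (rule is_ideal_gen_ideal)

lemma zeta_mem_J: "zeta k \<in> J k" "zeta (Suc k) \<in> J k" "zeta (k + 2) \<in> J k"
  unfolding J_def using gen_ideal_superset[of "{zeta k, zeta (Suc k), zeta (k + 2)}"] by auto

lemma J_subset:
  "is_ideal I \<Longrightarrow> zeta k \<in> I \<Longrightarrow> zeta (Suc k) \<in> I \<Longrightarrow> zeta (k + 2) \<in> I \<Longrightarrow> J k \<subseteq> I"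
  unfolding J_def by (rule gen_ideal_least) auto

lemma zeta_step:
  "zeta (k + 3) = alpha * zeta (k + 2)
     - (if odd k then of_nat (16 * (k + 2)^2) * zeta (k + 1) else 0)
     + of_nat (2 * (k + 2) * (k + 1)) * gamma * zeta k"
proof -
  have "k + 3 = Suc (k + 2)" "k + 2 - 1 = k + 1" "k + 2 - 2 = k" "odd (k + 2) \<longleftrightarrow> odd k" by simp_all
  then show ?thesis using zeta.simps(2)[of "k + 2"] by (simp only:)
qed

lemma zeta_step_mem:
  assumes I: "is_ideal I" and "zeta (k + 2) \<in> I" "odd k \<Longrightarrow> zeta (k + 1) \<in> I" "gamma * zeta k \<in> I"
  shows "zeta (k + 3) \<in> I"
  unfolding zeta_step using assms ideal_mult_left[OF I]
  by (auto simp: mult.assoc intro!: ideal_add[OF I] ideal_diff[OF I] ideal_zero[OF I])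

lemma gamma_zeta_eq:
  "of_nat (2 * (k + 2) * (k + 1)) * (gamma * zeta k) = zeta (k + 3) - alpha * zeta (k + 2)
     + (if odd k then of_nat (16 * (k + 2)^2) * zeta (k + 1) else 0)"
  unfolding zeta_step by (simp add: mult.assoc)

lemma gamma_zeta_mem:
  assumes I: "is_ideal I" and "zeta (k + 3) \<in> I" "zeta (k + 2) \<in> I" "odd k \<Longrightarrow> zeta (k + 1) \<in> I"
  shows "gamma * zeta k \<in> I"
proof (rule ideal_cancel_unit[OF I])
  show "of_nat (2 * (k + 2) * (k + 1)) dvd (1 :: complex poly poly)"
    by (rule of_nat_bipoly_dvd_one) simp
  have "zeta (k + 3) - alpha * zeta (k + 2)
     + (if odd k then of_nat (16 * (k + 2)^2) * zeta (k + 1) else 0) \<in> I"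
    using assms ideal_mult_left[OF I] by (auto intro!: ideal_add[OF I] ideal_diff[OF I] ideal_zero[OF I])
  then show "of_nat (2 * (k + 2) * (k + 1)) * (gamma * zeta k) \<in> I"
    by (simp only: gamma_zeta_eq)
qed

lemma J_Suc_subset: "J (Suc k) \<subseteq> J k"
proof (rule J_subset[OF is_ideal_J])
  have "zeta (k + 3) \<in> J k"
    using zeta_mem_J[of k] ideal_mult_left[OF is_ideal_J] by (intro zeta_step_mem[OF is_ideal_J]) auto
  then show "zeta (Suc k + 2) \<in> J k" by (simp add: eval_nat_numeral)
qed (use zeta_mem_J[of k] in \<open>simp_all add: eval_nat_numeral\<close>)

lemma gamma_mult_mem_J:
  assumes "even k" "x \<in> J k"
  shows "gamma * x \<in> J (k + 2)"
proof -
  let ?I = "{y. gamma * y \<in> J (k + 2)}"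
  have gens: "zeta (k + 2) \<in> J (k + 2)" "zeta (k + 3) \<in> J (k + 2)" "zeta (k + 4) \<in> J (k + 2)"
    using zeta_mem_J[of "k + 2"] by (simp_all add: eval_nat_numeral)
  have "gamma * zeta k \<in> J (k + 2)"
    using gens \<open>even k\<close> by (intro gamma_zeta_mem[OF is_ideal_J]) auto
  moreover have "gamma * zeta (k + 1) \<in> J (k + 2)"
    using gens by (intro gamma_zeta_mem[OF is_ideal_J]) (simp_all add: eval_nat_numeral)
  moreover have "gamma * zeta (k + 2) \<in> J (k + 2)"
    by (rule ideal_mult_left[OF is_ideal_J gens(1)])
  ultimately have "J k \<subseteq> ?I"
    by (intro J_subset is_ideal_quotient is_ideal_J) simp_all
  with assms(2) show ?thesis by auto
qed

section \<open>The staircase ideals\<close>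

fun stair_ideal :: "nat \<Rightarrow> complex poly poly set" where
  "stair_ideal 0 = UNIV"
| "stair_ideal (Suc h) = {a * zeta (2 * h + 2) + gamma * y | a y. y \<in> stair_ideal h}"

declare stair_ideal.simps(2) [simp del]

lemma stair_ideal_SucI: "y \<in> stair_ideal h \<Longrightarrow> a * zeta (2 * h + 2) + gamma * y \<in> stair_ideal (Suc h)"
  by (auto simp: stair_ideal.simps)

lemma stair_ideal_SucE:
  assumes "x \<in> stair_ideal (Suc h)"
  obtains a y where "x = a * zeta (2 * h + 2) + gamma * y" "y \<in> stair_ideal h"
  using assms by (auto simp: stair_ideal.simps)

lemma is_ideal_stair_ideal: "is_ideal (stair_ideal h)"
proof (induction h)
  case 0
  show ?case by (simp add: is_ideal_UNIV)
next
  case (Suc h)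
  show ?case unfolding is_ideal_def
  proof (intro conjI ballI allI)
    show "0 \<in> stair_ideal (Suc h)"
      using stair_ideal_SucI[OF ideal_zero[OF Suc.IH], of 0] by simp
  next
    fix x y assume "x \<in> stair_ideal (Suc h)" "y \<in> stair_ideal (Suc h)"
    then obtain a u b v where x: "x = a * zeta (2 * h + 2) + gamma * u" "u \<in> stair_ideal h"
      and y: "y = b * zeta (2 * h + 2) + gamma * v" "v \<in> stair_ideal h" by (meson stair_ideal_SucE)
    have "(a + b) * zeta (2 * h + 2) + gamma * (u + v) \<in> stair_ideal (Suc h)"
      using ideal_add[OF Suc.IH x(2) y(2)] by (rule stair_ideal_SucI)
    then show "x + y \<in> stair_ideal (Suc h)" by (simp only: x y algebra_simps)
  next
    fix r x assume "x \<in> stair_ideal (Suc h)"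
    then obtain a u where x: "x = a * zeta (2 * h + 2) + gamma * u" "u \<in> stair_ideal h" by (meson stair_ideal_SucE)
    have "(r * a) * zeta (2 * h + 2) + gamma * (r * u) \<in> stair_ideal (Suc h)"
      using ideal_mult_left[OF Suc.IH x(2)] by (rule stair_ideal_SucI)
    then show "r * x \<in> stair_ideal (Suc h)" by (simp only: x algebra_simps)
  qed
qed

lemma gamma_mult_mem_stair_ideal: "y \<in> stair_ideal h \<Longrightarrow> gamma * y \<in> stair_ideal (Suc h)"
  using stair_ideal_SucI[of y h 0] by (simp only: mult_zero_left add_0_left)

lemma J_eq_stair_ideal: "J (2 * h) = stair_ideal h"
proof (induction h)
  case 0
  show ?case using ideal_eq_UNIV[OF is_ideal_J] zeta_mem_J(1)[of 0] by simp
next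
  case (Suc h)
  let ?S = "stair_ideal (Suc h)"
  have S: "is_ideal ?S" by (rule is_ideal_stair_ideal)
  have gamma_J: "gamma * y \<in> ?S" if "y \<in> J (2 * h)" for y
    using that Suc.IH gamma_mult_mem_stair_ideal by blast
  have z2: "zeta (2 * h + 2) \<in> ?S"
    using stair_ideal_SucI[OF ideal_zero[OF is_ideal_stair_ideal], of 1 h] by simp
  have z3: "zeta (2 * h + 3) \<in> ?S"
    using zeta_step_mem[OF S, of "2 * h"] z2 gamma_J zeta_mem_J(1) by simp
  have z4: "zeta (2 * h + 4) \<in> ?S"
    using zeta_step_mem[OF S, of "2 * h + 1"] z2 z3 gamma_J zeta_mem_J(2)
    by (simp add: eval_nat_numeral)
  show ?case
  proof
    show "J (2 * Suc h) \<subseteq> ?S"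
      using z2 z3 z4 by (intro J_subset[OF S]) (simp_all add: eval_nat_numeral)
  next
    show "?S \<subseteq> J (2 * Suc h)"
    proof
      fix x assume "x \<in> ?S"
      then obtain a y where x: "x = a * zeta (2 * h + 2) + gamma * y" "y \<in> J (2 * h)"
        using Suc.IH by (auto elim: stair_ideal_SucE)
      have "gamma * y \<in> J (2 * h + 2)" using gamma_mult_mem_J[OF _ x(2)] by simp
      moreover have "a * zeta (2 * h + 2) \<in> J (2 * h + 2)"
        using zeta_mem_J(1) by (rule ideal_mult_left[OF is_ideal_J])
      ultimately show "x \<in> J (2 * Suc h)"
        unfolding x by (simp add: ideal_add[OF is_ideal_J])
    qed
  qed
qed

lemma zeta_mem_stair_ideal: "zeta (2 * h + 2) \<in> stair_ideal h"
  using zeta_mem_J(3)[of "2 * h"] by (simp add: J_eq_stair_ideal)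

lemma gamma_power_zeta_mem_stair_ideal: "i \<le> h \<Longrightarrow> gamma ^ i * zeta (2 * h - 2 * i) \<in> stair_ideal h"
proof (induction h arbitrary: i)
  case (Suc h)
  show ?case
  proof (cases i)
    case 0
    then show ?thesis using zeta_mem_J(1)[of "2 * Suc h"] J_eq_stair_ideal[of "Suc h"]
      by simp
  next
    case (Suc j)
    then have "gamma * (gamma ^ j * zeta (2 * h - 2 * j)) \<in> stair_ideal (Suc h)"
      using Suc.IH[of j] Suc.prems by (simp add: gamma_mult_mem_stair_ideal)
    then show ?thesis using Suc by (simp add: mult.assoc)
  qed
qed simp

lemma stair_ideal_Suc_low_degree:
  assumes f: "f \<in> stair_ideal (Suc h)" and deg: "degree f < 2 * h + 2"
  obtains f1 where "f1 \<in> stair_ideal h" "f = gamma * f1"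
proof -
  obtain a y where fay: "f = a * zeta (2 * h + 2) + gamma * y" and y: "y \<in> stair_ideal h"
    using f by (rule stair_ideal_SucE)
  have ev: "eval_gamma0 f = eval_gamma0 a * eval_gamma0 (zeta (2 * h + 2))"
    unfolding fay by (simp add: eval_gamma0_add eval_gamma0_mult eval_gamma0_gamma)
  have "eval_gamma0 a = 0"
  proof (rule ccontr)
    assume "eval_gamma0 a \<noteq> 0"
    then have "degree (eval_gamma0 f) \<ge> 2 * h + 2"
      unfolding ev by (simp add: degree_mult_eq eval_gamma0_zeta_nonzero degree_eval_gamma0_zeta)
    with degree_eval_gamma0_le[of f] deg show False by simp
  qed
  then obtain a' where "a = gamma * a'"
    by (metis dvdE gamma_dvd_iff_eval_gamma0)
  then have "f = gamma * (a' * zeta (2 * h + 2) + y)"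
    unfolding fay by (simp add: algebra_simps)
  moreover have "a' * zeta (2 * h + 2) + y \<in> stair_ideal h"
    using is_ideal_stair_ideal zeta_mem_stair_ideal y by (blast intro: ideal_add ideal_mult_left)
  ultimately show ?thesis using that by blast
qed

definition staircase :: "nat \<Rightarrow> (nat \<times> nat) set" where
  "staircase h = {(a, c). c < h \<and> a + 2 * c < 2 * h}"

lemma lead_exponents_notin_staircase:
  "f \<in> stair_ideal h \<Longrightarrow> f \<noteq> 0 \<Longrightarrow> (degree f, degree (lead_coeff f)) \<notin> staircase h"
proof (induction h arbitrary: f)
  case (Suc h)
  show ?case
  proof
    assume "(degree f, degree (lead_coeff f)) \<in> staircase (Suc h)"
    then have st: "degree (lead_coeff f) < Suc h" "degree f + 2 * degree (lead_coeff f) < 2 * h + 2"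
      by (auto simp: staircase_def)
    then obtain f1 where f1: "f1 \<in> stair_ideal h" "f = gamma * f1"
      using stair_ideal_Suc_low_degree[OF Suc.prems(1)] by (metis add_lessD1)
    with Suc.prems(2) have "f1 \<noteq> 0" by auto
    then have "degree f = degree f1" "degree (lead_coeff f) = Suc (degree (lead_coeff f1))"
      unfolding f1(2) gamma_mult by (simp_all add: degree_mult_eq)
    then have "(degree f1, degree (lead_coeff f1)) \<in> staircase h"
      using st by (simp add: staircase_def)
    with Suc.IH[OF f1(1) \<open>f1 \<noteq> 0\<close>] show False ..
  qed
qed (simp add: staircase_def)

definition supported_in :: "(nat \<times> nat) set \<Rightarrow> complex poly poly \<Rightarrow> bool" where
  "supported_in S p \<longleftrightarrow> (\<forall>a c. coeff (coeff p a) c \<noteq> 0 \<longrightarrow> (a, c) \<in> S)"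

lemma supported_in_0: "supported_in S 0"
  by (simp add: supported_in_def)

lemma supported_in_add: "supported_in S p \<Longrightarrow> supported_in S q \<Longrightarrow> supported_in S (p + q)"
  unfolding supported_in_def by (metis add.right_neutral coeff_add)

lemma supported_in_diff: "supported_in S p \<Longrightarrow> supported_in S q \<Longrightarrow> supported_in S (p - q)"
  unfolding supported_in_def by (metis coeff_diff diff_self diff_zero)

lemma supported_in_staircase_stair_ideal:
  assumes "supported_in (staircase h) f" "f \<in> stair_ideal h"
  shows "f = 0"
proof (rule ccontr)
  assume "f \<noteq> 0"
  then have "coeff (coeff f (degree f)) (degree (lead_coeff f)) \<noteq> 0" by simp
  with assms(1) have "(degree f, degree (lead_coeff f)) \<in> staircase h"
    unfolding supported_in_def by blast
  with lead_exponents_notin_staircase[OF assms(2) \<open>f \<noteq> 0\<close>] show False ..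
qed

lemma supported_in_monom: "(a, c) \<in> S \<Longrightarrow> supported_in S (monom (monom v c) a)"
  by (simp add: supported_in_def coeff_monom)

definition reducible_below :: "nat \<Rightarrow> nat \<Rightarrow> complex poly poly \<Rightarrow> bool" where
  "reducible_below h d p \<longleftrightarrow> (\<exists>n i r. p = n + i + r \<and> supported_in (staircase h) n
     \<and> i \<in> stair_ideal h \<and> (\<forall>k\<ge>d. coeff r k = 0))"

lemma reducible_below_0: "reducible_below h d 0"
  unfolding reducible_below_def
  by (rule exI[of _ 0], rule exI[of _ 0]) (simp add: supported_in_0 ideal_zero is_ideal_stair_ideal)

lemma reducible_below_add:
  assumes "reducible_below h d p" "reducible_below h d q"
  shows "reducible_below h d (p + q)"
proof -
  obtain n i r n' i' r' where
    p: "p = n + i + r" "supported_in (staircase h) n" "i \<in> stair_ideal h" "\<forall>k\<ge>d. coeff r k = 0" and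
    q: "q = n' + i' + r'" "supported_in (staircase h) n'" "i' \<in> stair_ideal h" "\<forall>k\<ge>d. coeff r' k = 0"
    using assms unfolding reducible_below_def by blast
  have "p + q = (n + n') + (i + i') + (r + r')" using p q by (simp add: algebra_simps)
  moreover have "i + i' \<in> stair_ideal h" using p q ideal_add[OF is_ideal_stair_ideal] by blast
  moreover have "\<forall>k\<ge>d. coeff (r + r') k = 0" using p(4) q(4) by simp
  ultimately show ?thesis
    unfolding reducible_below_def using supported_in_add[OF p(2) q(2)] by blast
qed

lemma reducible_below_sum:
  "(\<And>x. x \<in> A \<Longrightarrow> reducible_below h d (f x)) \<Longrightarrow> reducible_below h d (sum f A)"
  by (induction A rule: infinite_finite_induct) (auto intro: reducible_below_add reducible_below_0)

text \<open>A monomial outside the staircase is either divisible by \<open>\<gamma>\<^sup>h\<close> or by the leading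
  monomial \<open>\<alpha>\<^sup>m\<gamma>\<^sup>c\<close> of \<open>\<gamma>\<^sup>c\<zeta>\<^sub>m\<close>, \<open>m = 2h - 2c\<close>; in the second case it is reduced to terms of
  smaller \<open>\<alpha>\<close>-degree.\<close>
lemma reducible_below_monom: "reducible_below h d (monom (monom v c) d)"
proof -
  consider "h \<le> c" | "(d, c) \<in> staircase h" | "c < h" "2 * h - 2 * c \<le> d"
    by (force simp: staircase_def)
  then show ?thesis
  proof cases
    case 1
    have "gamma ^ h \<in> stair_ideal h"
      using gamma_power_zeta_mem_stair_ideal[of h h] by simp
    then have "gamma ^ h * monom (monom v (c - h)) d \<in> stair_ideal h"
      by (rule ideal_mult_right[OF is_ideal_stair_ideal])
    moreover have "gamma ^ h * monom (monom v (c - h)) d = monom (monom v c) d"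
      using 1 by (simp add: gamma_power_mult smult_monom mult_monom)
    ultimately show ?thesis unfolding reducible_below_def
      by (intro exI[of _ 0] exI[of _ "monom (monom v c) d"]) (simp add: supported_in_0)
  next
    case 2
    then show ?thesis unfolding reducible_below_def
      by (intro exI[of _ "monom (monom v c) d"] exI[of _ 0])
        (simp add: supported_in_monom ideal_zero is_ideal_stair_ideal)
  next
    case 3
    define m where "m = 2 * h - 2 * c"
    define M where "M = monom (monom v c) (d - m)"
    have m: "0 < m" "m \<le> d" using 3 by (simp_all add: m_def)
    have "M * alpha ^ m = monom (monom v c) d"
      using m by (simp add: M_def alpha_power mult_monom)
    then have split: "monom (monom v c) d = M * zeta m + (- M * (zeta m - alpha ^ m))"
      by (simp add: algebra_simps)
    have "gamma ^ c * zeta m \<in> stair_ideal h"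
      using 3 by (simp add: m_def gamma_power_zeta_mem_stair_ideal)
    then have "monom (monom v 0) (d - m) * (gamma ^ c * zeta m) \<in> stair_ideal h"
      by (rule ideal_mult_left[OF is_ideal_stair_ideal])
    moreover have "M = gamma ^ c * monom (monom v 0) (d - m)"
      by (simp add: M_def gamma_power_mult smult_monom mult_monom)
    ultimately have ideal: "M * zeta m \<in> stair_ideal h"
      by (simp add: ac_simps)
    have "degree (- M * (zeta m - alpha ^ m)) \<le> (d - m) + degree (zeta m - alpha ^ m)"
      by (rule order.trans[OF degree_mult_le]) (simp add: M_def degree_monom_le)
    also have "\<dots> < d" using degree_zeta_minus_alpha_power[OF m(1)] m(2) by linarith
    finally have "\<forall>k\<ge>d. coeff (- M * (zeta m - alpha ^ m)) k = 0" by (auto intro: coeff_eq_0)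
    then show ?thesis unfolding reducible_below_def split using ideal
      by (intro exI[of _ 0] exI[of _ "M * zeta m"] exI[of _ "- M * (zeta m - alpha ^ m)"])
        (simp add: supported_in_0)
  qed
qed

lemma exists_staircase_normal_form: "\<exists>n. supported_in (staircase h) n \<and> p - n \<in> stair_ideal h"
proof -
  have "\<forall>p. (\<forall>k\<ge>d. coeff p k = 0) \<longrightarrow> (\<exists>n. supported_in (staircase h) n \<and> p - n \<in> stair_ideal h)"
    for d
  proof (induction d)
    case 0
    show ?case
    proof (intro allI impI exI[of _ 0] conjI)
      fix p :: "complex poly poly" assume "\<forall>k\<ge>0. coeff p k = 0"
      then have "p = 0" by (simp add: poly_eq_iff)
      then show "p - 0 \<in> stair_ideal h" by (simp add: ideal_zero is_ideal_stair_ideal)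
    qed (rule supported_in_0)
  next
    case (Suc d)
    show ?case
    proof (intro allI impI)
      fix p :: "complex poly poly" assume high: "\<forall>k\<ge>Suc d. coeff p k = 0"
      let ?q = "coeff p d"
      have "reducible_below h d (monom ?q d)"
        by (subst poly_as_sum_of_monoms[of ?q, symmetric])
          (simp add: monom_sum reducible_below_sum reducible_below_monom)
      then obtain n i r where nir: "monom ?q d = n + i + r" "supported_in (staircase h) n"
        "i \<in> stair_ideal h" "\<forall>k\<ge>d. coeff r k = 0"
        unfolding reducible_below_def by blast
      have "\<forall>k\<ge>d. coeff (r + (p - monom ?q d)) k = 0"
        using nir(4) high by (auto simp: coeff_monom le_Suc_eq)
      then obtain n' where n': "supported_in (staircase h) n'" "r + (p - monom ?q d) - n' \<in> stair_ideal h"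
        using Suc.IH by blast
      have "p - (n + n') = i + (r + (p - monom ?q d) - n')"
        using nir(1) by (simp add: algebra_simps)
      also have "\<dots> \<in> stair_ideal h" using nir(3) n'(2) by (rule ideal_add[OF is_ideal_stair_ideal])
      finally show "\<exists>n. supported_in (staircase h) n \<and> p - n \<in> stair_ideal h"
        using supported_in_add[OF nir(2) n'(1)] by blast
    qed
  qed
  from this[of "Suc (degree p)"] show ?thesis by (simp add: coeff_eq_0 Suc_le_eq)
qed

definition staircase_poly :: "nat \<Rightarrow> (nat \<times> nat \<Rightarrow> complex) \<Rightarrow> complex poly poly" where
  "staircase_poly h r = (\<Sum>(a, c)\<in>staircase h. monom (monom (r (a, c)) c) a)"

lemma finite_staircase: "finite (staircase h)"
  by (rule finite_subset[of _ "{..<2 * h} \<times> {..<h}"]) (auto simp: staircase_def)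

lemma coeff_staircase_poly:
  "coeff (coeff (staircase_poly h r) a) c = (if (a, c) \<in> staircase h then r (a, c) else 0)"
proof -
  have "coeff (coeff (staircase_poly h r) a) c = (\<Sum>x\<in>staircase h. if x = (a, c) then r x else 0)"
    unfolding staircase_poly_def coeff_sum by (rule sum.cong) (auto simp: coeff_monom split: if_splits)
  then show ?thesis using finite_staircase by (simp add: sum.delta')
qed

lemma staircase_normal_form:
  "\<exists>!r. (\<forall>x. x \<notin> staircase h \<longrightarrow> r x = 0) \<and> p - staircase_poly h r \<in> stair_ideal h"
proof -
  obtain n where n: "supported_in (staircase h) n" "p - n \<in> stair_ideal h"
    using exists_staircase_normal_form by blast
  define r0 where "r0 = (\<lambda>(a, c). if (a, c) \<in> staircase h then coeff (coeff n a) c else 0)"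
  have "staircase_poly h r0 = n"
    using n(1) by (intro poly_eqI) (auto simp: coeff_staircase_poly r0_def supported_in_def)
  then have r0: "(\<forall>x. x \<notin> staircase h \<longrightarrow> r0 x = 0) \<and> p - staircase_poly h r0 \<in> stair_ideal h"
    using n(2) by (auto simp: r0_def)
  show ?thesis
  proof (rule ex1I[of _ r0])
    fix r assume r: "(\<forall>x. x \<notin> staircase h \<longrightarrow> r x = 0) \<and> p - staircase_poly h r \<in> stair_ideal h"
    have "staircase_poly h r - staircase_poly h r0
        = (p - staircase_poly h r0) - (p - staircase_poly h r)" by simp
    also have "\<dots> \<in> stair_ideal h" using r r0 by (blast intro: ideal_diff is_ideal_stair_ideal)
    finally have "staircase_poly h r - staircase_poly h r0 = 0"
      by (intro supported_in_staircase_stair_ideal supported_in_diff)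
        (auto simp: supported_in_def coeff_staircase_poly split: if_splits)
    then have eq: "coeff (coeff (staircase_poly h r) a) c = coeff (coeff (staircase_poly h r0) a) c"
      for a c by simp
    show "r = r0"
    proof
      fix x :: "nat \<times> nat"
      obtain a c where x: "x = (a, c)" by fastforce
      show "r x = r0 x"
        using eq[of a c] r r0 unfolding x coeff_staircase_poly by (cases "(a, c) \<in> staircase h") auto
    qed
  qed (rule r0)
qed

lemma lex_lead_mon_gamma_power_zeta: "lex_lead_mon (gamma ^ i * zeta m) = mon m i"
  using lead_coeff_zeta[of m]
  by (simp add: lex_lead_mon_def mon_def gamma_power_mult degree_zeta degree_monom_eq)

lemma gamma_power_zeta_nonzero: "gamma ^ i * zeta m \<noteq> 0"
  by (simp add: gamma_power_mult zeta_nonzero)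

lemma lex_lead_mon_mem_gen_ideal:
  assumes "f \<in> stair_ideal h" "f \<noteq> 0"
  shows "lex_lead_mon f \<in> gen_ideal {mon (2 * h - 2 * i) i | i. i \<le> h}"
proof -
  let ?M = "{mon (2 * h - 2 * i) i | i. i \<le> h}"
  let ?d = "degree f" and ?c = "degree (lead_coeff f)"
  obtain i where i: "i \<le> h" "i \<le> ?c" "2 * h - 2 * i \<le> ?d"
  proof (cases "h \<le> ?c")
    case True
    then show ?thesis using that[of h] by simp
  next
    case False
    then have "2 * h - 2 * ?c \<le> ?d"
      using lead_exponents_notin_staircase[OF assms] by (simp add: staircase_def)
    then show ?thesis using that[of ?c] False by simp
  qed
  have "mon (2 * h - 2 * i) i \<in> ?M" using i(1) by auto
  then have "mon (2 * h - 2 * i) i \<in> gen_ideal ?M" by (rule subsetD[OF gen_ideal_superset])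
  then have "mon (?d - (2 * h - 2 * i)) (?c - i) * mon (2 * h - 2 * i) i \<in> gen_ideal ?M"
    by (rule ideal_mult_left[OF is_ideal_gen_ideal])
  moreover have "mon (?d - (2 * h - 2 * i)) (?c - i) * mon (2 * h - 2 * i) i = lex_lead_mon f"
    using i(2,3) by (simp add: mon_mult lex_lead_mon_def)
  ultimately show ?thesis by simp
qed

lemma initial_ideal_stair_ideal:
  "initial_ideal (stair_ideal h) = gen_ideal {mon (2 * h - 2 * i) i | i. i \<le> h}"
proof
  show "initial_ideal (stair_ideal h) \<subseteq> gen_ideal {mon (2 * h - 2 * i) i | i. i \<le> h}"
    unfolding initial_ideal_def
    by (rule gen_ideal_least[OF is_ideal_gen_ideal]) (auto intro: lex_lead_mon_mem_gen_ideal)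
next
  let ?LM = "{lex_lead_mon f | f. f \<in> stair_ideal h \<and> f \<noteq> 0}"
  have "{mon (2 * h - 2 * i) i | i. i \<le> h} \<subseteq> ?LM"
  proof
    fix x assume "x \<in> {mon (2 * h - 2 * i) i | i. i \<le> h}"
    then obtain i where "i \<le> h" "x = lex_lead_mon (gamma ^ i * zeta (2 * h - 2 * i))"
      by (auto simp: lex_lead_mon_gamma_power_zeta)
    then show "x \<in> ?LM"
      using gamma_power_zeta_mem_stair_ideal gamma_power_zeta_nonzero by blast
  qed
  also have "?LM \<subseteq> gen_ideal ?LM" by (rule gen_ideal_superset)
  finally show "gen_ideal {mon (2 * h - 2 * i) i | i. i \<le> h} \<subseteq> initial_ideal (stair_ideal h)"
    unfolding initial_ideal_def by (rule gen_ideal_least[OF is_ideal_gen_ideal])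
qed

lemma groebner_basis_stair_ideal:
  "is_groebner_basis {gamma ^ i * zeta (2 * h - 2 * i) | i. i \<le> h} (stair_ideal h)"
proof -
  let ?G = "{gamma ^ i * zeta (2 * h - 2 * i) | i. i \<le> h}"
  have G: "?G = (\<lambda>i. gamma ^ i * zeta (2 * h - 2 * i)) ` {..h}" by auto
  have "?G - {0} = ?G" using gamma_power_zeta_nonzero by auto
  then have "lex_lead_mon ` (?G - {0}) = (\<lambda>i. mon (2 * h - 2 * i) i) ` {..h}"
    by (simp only: G image_image lex_lead_mon_gamma_power_zeta)
  also have "\<dots> = {mon (2 * h - 2 * i) i | i. i \<le> h}" by auto
  finally have "lex_lead_mon ` (?G - {0}) = {mon (2 * h - 2 * i) i | i. i \<le> h}" .
  moreover have "?G \<subseteq> stair_ideal h" using gamma_power_zeta_mem_stair_ideal by auto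
  ultimately show ?thesis unfolding is_groebner_basis_def initial_ideal_stair_ideal by simp
qed

section \<open>\<open>J\<^sub>g = J\<^sub>g\<^sub>+\<^sub>1\<close> for even \<open>g\<close>\<close>

definition alpha_poly :: "real poly \<Rightarrow> complex poly poly" where
  "alpha_poly p = map_poly (\<lambda>x. [:complex_of_real x:]) p"

lemma alpha_poly_diff: "alpha_poly (p - q) = alpha_poly p - alpha_poly q"
  unfolding alpha_poly_def by (rule map_poly_diff_hom) simp_all

lemma alpha_poly_mult: "alpha_poly (p * q) = alpha_poly p * alpha_poly q"
  unfolding alpha_poly_def by (rule map_poly_mult_hom) simp_all

lemma alpha_poly_const: "alpha_poly [:x:] = [:[:complex_of_real x:]:]"
  by (simp add: alpha_poly_def map_poly_pCons)

lemma alpha_poly_X: "alpha_poly [:0, 1:] = alpha"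
  by (simp add: alpha_poly_def map_poly_pCons alpha_def monom_Suc monom_0 one_pCons)

lemma alpha_poly_smult: "alpha_poly (smult x p) = [:[:complex_of_real x:]:] * alpha_poly p"
  using alpha_poly_mult[of "[:x:]" p] by (simp add: alpha_poly_const)

lemma poly_alpha_poly: "poly (alpha_poly p) [:complex_of_real x:] = [:complex_of_real (poly p x):]"
  by (induction p) (simp_all add: alpha_poly_def map_poly_pCons)

lemma const_bipoly_dvd_one: "x \<noteq> 0 \<Longrightarrow> [:[:complex_of_real x:]:] dvd 1"
  by (simp add: is_unit_const_poly_iff dvd_field_iff)

lemma inverse_const_mult_of_nat: "n \<noteq> 0 \<Longrightarrow> [:[:complex_of_real (1 / real n):]:] * of_nat n = 1"
  by (simp add: of_nat_poly one_pCons)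

lemma of_nat_bipoly_eq_const: "(of_nat n :: complex poly poly) = [:[:complex_of_real (real n):]:]"
  by (simp add: of_nat_poly)

lemma gamma_power_zeta_mem_J_Suc:
  "j \<le> h \<Longrightarrow> gamma ^ j * zeta (2 * h - 2 * j + 2) \<in> J (2 * h + 1)"
proof (cases j)
  case 0
  then show ?thesis using zeta_mem_J(2)[of "2 * h + 1"] by simp
next
  case (Suc i)
  assume "j \<le> h"
  then have "gamma ^ i * zeta (2 * h - 2 * i) \<in> J (2 * h)"
    using Suc gamma_power_zeta_mem_stair_ideal[of i h] by (simp add: J_eq_stair_ideal)
  then have "gamma * (gamma ^ i * zeta (2 * h - 2 * i)) \<in> J (Suc (2 * h + 1))"
    using gamma_mult_mem_J[of "2 * h"] by simp
  moreover have "2 * h - 2 * j + 2 = 2 * h - 2 * i" using Suc \<open>j \<le> h\<close> by simp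
  ultimately show ?thesis
    using J_Suc_subset[of "2 * h + 1"] Suc by (auto simp: mult.assoc)
qed

text \<open>Running the recursion of \<open>\<zeta>\<close> downwards from \<open>\<zeta>\<^sub>g\<close>: modulo \<open>J\<^sub>g\<^sub>+\<^sub>1\<close>, with \<open>m = g - 2j\<close>,
  \<open>\<gamma>\<^sup>j\<zeta>\<^sub>m\<^sub>+\<^sub>1 \<equiv> P\<^sub>j\<zeta>\<^sub>g\<close> and \<open>\<gamma>\<^sup>j\<zeta>\<^sub>m \<equiv> Q\<^sub>j\<zeta>\<^sub>g\<close>, where \<open>(P\<^sub>j, Q\<^sub>j) = descent_pair g j\<close>.\<close>
fun descent_pair :: "nat \<Rightarrow> nat \<Rightarrow> real poly \<times> real poly" where
  "descent_pair g 0 = (0, 1)"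
| "descent_pair g (Suc j) =
    (let m = g - 2 * j; P = fst (descent_pair g j); Q = snd (descent_pair g j) in
     (smult (1 / real (2 * (m + 1) * m)) (smult (real (16 * (m + 1)^2)) Q - [:0, 1:] * P),
      smult (1 / real (2 * m * (m - 1))) (P - [:0, 1:] * Q)))"

lemma gamma_zeta_eqs_below_even:
  assumes "even m" "2 \<le> m"
  shows "of_nat (2 * (m + 1) * m) * (gamma * zeta (m - 1))
           = zeta (m + 2) - alpha * zeta (m + 1) + of_nat (16 * (m + 1)^2) * zeta m"
    and "of_nat (2 * m * (m - 1)) * (gamma * zeta (m - 2)) = zeta (m + 1) - alpha * zeta m"
proof -
  have "m - 1 + 3 = m + 2" "m - 1 + 2 = m + 1" "m - 1 + 1 = m" "odd (m - 1) = True"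
    using assms by simp_all
  then show "of_nat (2 * (m + 1) * m) * (gamma * zeta (m - 1))
      = zeta (m + 2) - alpha * zeta (m + 1) + of_nat (16 * (m + 1)^2) * zeta m"
    using gamma_zeta_eq[of "m - 1"] by (simp only: if_True)
  have "m - 2 + 3 = m + 1" "m - 2 + 2 = m" "m - 2 + 1 = m - 1" "odd (m - 2) = False"
    using assms by simp_all
  then show "of_nat (2 * m * (m - 1)) * (gamma * zeta (m - 2)) = zeta (m + 1) - alpha * zeta m"
    using gamma_zeta_eq[of "m - 2"] by (simp only: if_False add_0_right)
qed

lemma alpha_poly_descent_pair_Suc:
  assumes "m = g - 2 * j"
  shows "alpha_poly (fst (descent_pair g (Suc j))) = [:[:complex_of_real (1 / real (2 * (m + 1) * m)):]:]
           * (of_nat (16 * (m + 1)^2) * alpha_poly (snd (descent_pair g j)) - alpha * alpha_poly (fst (descent_pair g j)))"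
    and "alpha_poly (snd (descent_pair g (Suc j))) = [:[:complex_of_real (1 / real (2 * m * (m - 1))):]:]
           * (alpha_poly (fst (descent_pair g j)) - alpha * alpha_poly (snd (descent_pair g j)))"
  by (simp_all only: assms descent_pair.simps Let_def fst_conv snd_conv alpha_poly_smult alpha_poly_diff
      alpha_poly_mult alpha_poly_X of_nat_bipoly_eq_const)

lemma descent_congruences:
  assumes "j \<le> h"
  shows "gamma ^ j * zeta (2 * h - 2 * j + 1) - alpha_poly (fst (descent_pair (2 * h) j)) * zeta (2 * h)
           \<in> J (2 * h + 1)
       \<and> gamma ^ j * zeta (2 * h - 2 * j) - alpha_poly (snd (descent_pair (2 * h) j)) * zeta (2 * h)
           \<in> J (2 * h + 1)"
  using assms
proof (induction j)
  case 0
  show ?case using zeta_mem_J(1)[of "2 * h + 1"] ideal_zero[OF is_ideal_J] by (simp add: alpha_poly_def)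
next
  case (Suc j)
  let ?K = "J (2 * h + 1)" and ?z = "zeta (2 * h)"
  define m where "m = 2 * h - 2 * j"
  define P Q where "P = alpha_poly (fst (descent_pair (2 * h) j))"
    and "Q = alpha_poly (snd (descent_pair (2 * h) j))"
  define E F where "E = gamma ^ j * zeta (m + 1) - P * ?z" and "F = gamma ^ j * zeta m - Q * ?z"
  define c1 c2 C where "c1 = 2 * (m + 1) * m" and "c2 = 2 * m * (m - 1)" and "C = 16 * (m + 1)^2"
  define u1 u2 where "u1 = [:[:complex_of_real (1 / real c1):]:]"
    and "u2 = [:[:complex_of_real (1 / real c2):]:]"
  have K: "is_ideal ?K" by (rule is_ideal_J)
  have m: "even m" "2 \<le> m" using Suc.prems by (simp_all add: m_def)
  have EF: "E \<in> ?K" "F \<in> ?K" using Suc by (simp_all add: E_def F_def P_def Q_def m_def)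
  have top: "gamma ^ j * zeta (m + 2) \<in> ?K"
    using gamma_power_zeta_mem_J_Suc[of j h] Suc.prems by (simp add: m_def)
  have "c1 \<noteq> 0" "c2 \<noteq> 0" using m by (simp_all add: c1_def c2_def)
  then have inv: "u1 * of_nat c1 = 1" "u2 * of_nat c2 = 1"
    unfolding u1_def u2_def by (blast intro: inverse_const_mult_of_nat)+
  note rec = gamma_zeta_eqs_below_even[OF m, folded c1_def c2_def C_def]
  note P'Q' = alpha_poly_descent_pair_Suc[OF m_def, folded c1_def c2_def C_def, folded u1_def u2_def P_def Q_def]
  have "gamma ^ Suc j * zeta (m - 1) = (u1 * of_nat c1) * (gamma ^ j * (gamma * zeta (m - 1)))"
    by (simp only: inv mult_1_left power_Suc2 mult.assoc)
  also have "\<dots> = u1 * (gamma ^ j * (of_nat c1 * (gamma * zeta (m - 1))))"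
    by (simp only: ac_simps)
  finally have "gamma ^ Suc j * zeta (m - 1) - alpha_poly (fst (descent_pair (2 * h) (Suc j))) * ?z
      = u1 * (gamma ^ j * zeta (m + 2) - alpha * E + of_nat C * F)"
    unfolding rec(1) P'Q'(1) E_def F_def by (simp add: algebra_simps)
  also have "\<dots> \<in> ?K"
    by (rule ideal_mult_left[OF K ideal_add[OF K ideal_diff[OF K top ideal_mult_left[OF K EF(1)]]
          ideal_mult_left[OF K EF(2)]]])
  finally have 1: "gamma ^ Suc j * zeta (m - 1) - alpha_poly (fst (descent_pair (2 * h) (Suc j))) * ?z \<in> ?K" .
  have "gamma ^ Suc j * zeta (m - 2) = (u2 * of_nat c2) * (gamma ^ j * (gamma * zeta (m - 2)))"
    by (simp only: inv mult_1_left power_Suc2 mult.assoc)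
  also have "\<dots> = u2 * (gamma ^ j * (of_nat c2 * (gamma * zeta (m - 2))))"
    by (simp only: ac_simps)
  finally have "gamma ^ Suc j * zeta (m - 2) - alpha_poly (snd (descent_pair (2 * h) (Suc j))) * ?z
      = u2 * (E - alpha * F)"
    unfolding rec(2) P'Q'(2) E_def F_def by (simp add: algebra_simps)
  also have "\<dots> \<in> ?K"
    by (rule ideal_mult_left[OF K ideal_diff[OF K EF(1) ideal_mult_left[OF K EF(2)]]])
  finally have 2: "gamma ^ Suc j * zeta (m - 2) - alpha_poly (snd (descent_pair (2 * h) (Suc j))) * ?z \<in> ?K" .
  have "2 * h - 2 * Suc j + 1 = m - 1" "2 * h - 2 * Suc j = m - 2"
    using Suc.prems by (simp_all add: m_def)
  with 1 2 show ?case by simp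
qed

text \<open>With \<open>e = -sgn x\<close> the signs of \<open>e\<^sup>jQ\<^sub>j(x)\<close> and \<open>e\<^sup>j\<^sup>+\<^sup>1P\<^sub>j(x)\<close> are preserved by the recursion,
  since all its constants are positive.\<close>
lemma descent_pair_sign:
  fixes e x :: real
  assumes e: "e^2 = 1" "e * x < 0" and "j \<le> h"
  shows "e ^ j * poly (snd (descent_pair (2 * h) j)) x > 0
       \<and> e ^ Suc j * poly (fst (descent_pair (2 * h) j)) x \<ge> 0"
  using \<open>j \<le> h\<close>
proof (induction j)
  case (Suc j)
  define m where "m = 2 * h - 2 * j"
  define p q where "p = poly (fst (descent_pair (2 * h) j)) x" and "q = poly (snd (descent_pair (2 * h) j)) x"
  define A B C where "A = 1 / real (2 * (m + 1) * m)" and "B = 1 / real (2 * m * (m - 1))"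
    and "C = real (16 * (m + 1)^2)"
  have "2 \<le> m" using Suc.prems by (simp add: m_def)
  then have "0 < 2 * (m + 1) * m" "0 < 2 * m * (m - 1)" "0 < 16 * (m + 1)^2" by simp_all
  then have ABC: "A > 0" "B > 0" "C > 0"
    unfolding A_def B_def C_def by (simp_all only: of_nat_0_less_iff zero_less_divide_1_iff)
  have IH: "e ^ j * q > 0" "e ^ Suc j * p \<ge> 0"
    using Suc by (simp_all add: p_def q_def)
  have rec: "poly (fst (descent_pair (2 * h) (Suc j))) x = A * (C * q - x * p)"
    "poly (snd (descent_pair (2 * h) (Suc j))) x = B * (p - x * q)"
    by (simp_all add: Let_def A_def B_def C_def p_def q_def m_def)
  have snd_eq: "e ^ Suc j * poly (snd (descent_pair (2 * h) (Suc j))) x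
      = B * (e ^ Suc j * p + (- e * x) * (e ^ j * q))"
    unfolding rec by (simp add: algebra_simps)
  have fst_eq: "e ^ Suc (Suc j) * poly (fst (descent_pair (2 * h) (Suc j))) x
      = A * (C * (e^2 * (e ^ j * q)) + (- e * x) * (e ^ Suc j * p))"
    unfolding rec by (simp add: algebra_simps power2_eq_square)
  have ex: "- e * x > 0" using e(2) by simp
  have "B * (e ^ Suc j * p + (- e * x) * (e ^ j * q)) > 0"
    by (rule mult_pos_pos[OF ABC(2) add_nonneg_pos[OF IH(2) mult_pos_pos[OF ex IH(1)]]])
  moreover have "A * (C * (e ^ j * q) + (- e * x) * (e ^ Suc j * p)) \<ge> 0"
    by (rule mult_nonneg_nonneg[OF less_imp_le[OF ABC(1)] add_nonneg_nonneg[OF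
          mult_nonneg_nonneg[OF less_imp_le[OF ABC(3)] less_imp_le[OF IH(1)]]
          mult_nonneg_nonneg[OF less_imp_le[OF ex] IH(2)]]])
  ultimately show ?case unfolding snd_eq fst_eq e(1) mult_1_left ..
qed simp

lemma descent_pair_nonvanishing:
  fixes x :: real
  assumes "x \<noteq> 0"
  shows "poly ([:0, 1:] * snd (descent_pair (2 * h) h) - fst (descent_pair (2 * h) h)) x \<noteq> 0"
proof -
  define e :: real where "e = - sgn x"
  have e: "e^2 = 1" "e * x < 0" using assms by (auto simp: e_def sgn_if)
  define p q where "p = poly (fst (descent_pair (2 * h) h)) x" and "q = poly (snd (descent_pair (2 * h) h)) x"
  have "e ^ h * q > 0" "e ^ Suc h * p \<ge> 0"
    using descent_pair_sign[OF e order_refl] by (simp_all add: p_def q_def)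
  moreover have "e ^ Suc h * (x * q - p) = (e * x) * (e ^ h * q) - e ^ Suc h * p"
    by (simp add: algebra_simps)
  moreover have "(e * x) * (e ^ h * q) < 0" using e(2) \<open>e ^ h * q > 0\<close> by (rule mult_neg_pos)
  ultimately have "e ^ Suc h * (x * q - p) < 0" by linarith
  then show ?thesis by (auto simp: p_def q_def)
qed

definition odd_roots :: "nat \<Rightarrow> real list" where
  "odd_roots h = concat (map (\<lambda>l. [real (4 * (2 * l + 1)), - real (4 * (2 * l + 1))]) [0..<h])"

definition zeta_even_gamma0 :: "nat \<Rightarrow> complex poly poly" where
  "zeta_even_gamma0 h = prod_list (map (\<lambda>x. [:- [:complex_of_real x:], 1:]) (odd_roots h))"

lemma zeta_even_gamma0_Suc:
  "zeta_even_gamma0 (Suc h) = zeta_even_gamma0 h * (alpha ^ 2 - of_nat (16 * (2 * h + 1)^2))"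
proof -
  define r where "r = real (4 * (2 * h + 1))"
  have "odd_roots (Suc h) = odd_roots h @ [r, - r]" by (simp add: odd_roots_def r_def)
  then have "zeta_even_gamma0 (Suc h)
      = zeta_even_gamma0 h * ([:- [:complex_of_real r:], 1:] * [:- [:complex_of_real (- r):], 1:])"
    by (simp only: zeta_even_gamma0_def map_append prod_list.append list.map prod_list.Cons
        prod_list.Nil mult_1_right)
  also have "[:- [:complex_of_real r:], 1:] * [:- [:complex_of_real (- r):], 1:]
      = alpha ^ 2 - of_nat (16 * (2 * h + 1)^2)"
    by (simp add: r_def alpha_def monom_Suc monom_0 of_nat_poly power2_eq_square algebra_simps)
  finally show ?thesis .
qed

lemma zeta_congruent_gamma0:
  "gamma dvd zeta (2 * h) - zeta_even_gamma0 h \<and> gamma dvd zeta (2 * h + 1) - alpha * zeta_even_gamma0 h"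
proof (induction h)
  case 0
  show ?case by (simp add: zeta_even_gamma0_def odd_roots_def zeta_Suc_even[of 0])
next
  case (Suc h)
  let ?Z = "zeta_even_gamma0 h" and ?Z' = "zeta_even_gamma0 (Suc h)"
  have "zeta (2 * h + 2) - ?Z' = alpha * (zeta (2 * h + 1) - alpha * ?Z)
      - of_nat (16 * (2 * h + 1)^2) * (zeta (2 * h) - ?Z)
      + gamma * (of_nat (2 * (2 * h + 1) * (2 * h)) * zeta (2 * h - 1))"
    using zeta_Suc_odd[of "2 * h + 1"]
    by (simp add: zeta_even_gamma0_Suc algebra_simps power2_eq_square)
  then have even: "gamma dvd zeta (2 * h + 2) - ?Z'"
    using Suc.IH by (simp add: dvd_add dvd_diff dvd_mult)
  have "even (2 * h + 2)" by simp
  from zeta_Suc_even[OF this]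
  have "zeta (2 * h + 3) - alpha * ?Z' = alpha * (zeta (2 * h + 2) - ?Z')
      + gamma * (of_nat (2 * (2 * h + 2) * (2 * h + 1)) * zeta (2 * h))"
    by (simp add: algebra_simps eval_nat_numeral)
  then have "gamma dvd zeta (2 * h + 3) - alpha * ?Z'"
    using even by (simp add: dvd_add dvd_mult)
  with even show ?case by (simp add: eval_nat_numeral)
qed

lemma zeta_square_mem_J_Suc:
  assumes "0 < h"
  shows "zeta (2 * h) * zeta (2 * h) \<in> J (2 * h + 1)"
proof -
  let ?K = "J (2 * h + 1)" and ?z = "zeta (2 * h)"
  have K: "is_ideal ?K" by (rule is_ideal_J)
  define v where "v = real (16 * (2 * h + 1)^2) / real (2 * (2 * h + 1) * (2 * h))"
  define c where "c = [:[:complex_of_real v:]:]"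
  have "alpha_poly (fst (descent_pair (2 * h) 1)) = c"
    by (simp add: v_def c_def alpha_poly_const)
  moreover have "2 * h - 2 * 1 + 1 = 2 * h - 1" using assms by simp
  moreover have "gamma ^ 1 * zeta (2 * h - 2 * 1 + 1) - alpha_poly (fst (descent_pair (2 * h) 1)) * ?z \<in> ?K"
    using assms by (intro conjunct1[OF descent_congruences]) simp
  ultimately have a: "gamma * zeta (2 * h - 1) - c * ?z \<in> ?K" by (simp only: power_one_right)
  have "?z * zeta (2 * h - 1) \<in> J (2 * h)" by (rule ideal_mult_right[OF is_ideal_J zeta_mem_J(1)])
  then have "gamma * (?z * zeta (2 * h - 1)) \<in> ?K"
    using gamma_mult_mem_J[of "2 * h"] J_Suc_subset[of "2 * h + 1"] by auto
  then have "gamma * (?z * zeta (2 * h - 1)) - ?z * (gamma * zeta (2 * h - 1) - c * ?z) \<in> ?K"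
    using ideal_mult_left[OF K a] by (rule ideal_diff[OF K])
  then have "c * (?z * ?z) \<in> ?K" by (simp add: algebra_simps)
  moreover have "v \<noteq> 0" using assms unfolding v_def by (simp only: divide_eq_0_iff of_nat_eq_0_iff) simp
  then have "c dvd 1" unfolding c_def by (rule const_bipoly_dvd_one)
  ultimately show ?thesis by (blast intro: ideal_cancel_unit[OF K])
qed

lemma zeta_mult_descent_residue_mem_J_Suc:
  "zeta (2 * h) * alpha_poly ([:0, 1:] * snd (descent_pair (2 * h) h) - fst (descent_pair (2 * h) h))
     \<in> J (2 * h + 1)"
proof -
  let ?K = "J (2 * h + 1)" and ?z = "zeta (2 * h)"
  define P Q where "P = alpha_poly (fst (descent_pair (2 * h) h))"
    and "Q = alpha_poly (snd (descent_pair (2 * h) h))"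
  have "?z * alpha_poly ([:0, 1:] * snd (descent_pair (2 * h) h) - fst (descent_pair (2 * h) h))
      = (gamma ^ h * zeta (2 * h - 2 * h + 1) - P * ?z) - alpha * (gamma ^ h * zeta (2 * h - 2 * h) - Q * ?z)"
    unfolding alpha_poly_diff alpha_poly_mult alpha_poly_X P_def Q_def
    by (simp add: zeta_1[unfolded One_nat_def] algebra_simps)
  also have "\<dots> \<in> ?K"
    using descent_congruences[of h h] unfolding P_def Q_def
    by (blast intro: ideal_diff[OF is_ideal_J] ideal_mult_left[OF is_ideal_J])
  finally show ?thesis .
qed

lemma poly_descent_residue_dvd_one:
  assumes "x \<in> set (odd_roots h)"
  shows "poly (alpha_poly ([:0, 1:] * snd (descent_pair (2 * h) h) - fst (descent_pair (2 * h) h)))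
           [:complex_of_real x:] dvd 1"
proof -
  have "x \<noteq> 0" using assms by (auto simp: odd_roots_def)
  then have "poly ([:0, 1:] * snd (descent_pair (2 * h) h) - fst (descent_pair (2 * h) h)) x \<noteq> 0"
    by (rule descent_pair_nonvanishing)
  then show ?thesis
    by (simp only: poly_alpha_poly is_unit_const_poly_iff dvd_field_iff of_real_eq_0_iff) blast
qed

lemma zeta_mult_zeta_even_gamma0_mem_J_Suc:
  assumes "0 < h"
  shows "zeta (2 * h) * zeta_even_gamma0 h \<in> J (2 * h + 1)"
proof -
  let ?K = "J (2 * h + 1)" and ?z = "zeta (2 * h)"
  obtain w where w: "?z - zeta_even_gamma0 h = gamma * w"
    using zeta_congruent_gamma0[of h] by blast
  have "gamma * ?z \<in> ?K"
    using gamma_mult_mem_J[OF _ zeta_mem_J(1), of "2 * h"] J_Suc_subset[of "2 * h + 1"] by auto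
  moreover have "?z * ?z \<in> ?K" using zeta_square_mem_J_Suc assms by simp
  ultimately have "?z * ?z - w * (gamma * ?z) \<in> ?K"
    by (blast intro: ideal_diff[OF is_ideal_J] ideal_mult_left[OF is_ideal_J])
  moreover have "?z * zeta_even_gamma0 h = ?z * ?z - w * (gamma * ?z)"
    using w by (simp add: algebra_simps)
  ultimately show ?thesis by simp
qed

lemma J_even_eq_J_Suc: "J (2 * h) = J (2 * h + 1)"
proof (cases "h = 0")
  case True
  have "of_nat 16 * 1 = alpha * zeta 1 - zeta 2"
    using zeta_Suc_odd[of 1] by (simp add: numeral_2_eq_2)
  also have "\<dots> \<in> J 1"
    using zeta_mem_J[of 1] by (intro ideal_diff[OF is_ideal_J] ideal_mult_left[OF is_ideal_J])
      (simp_all add: numeral_2_eq_2)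
  finally have "1 \<in> J 1" by (rule ideal_cancel_unit[OF is_ideal_J of_nat_bipoly_dvd_one, rotated]) simp
  then have "J 1 = UNIV" by (rule ideal_eq_UNIV[OF is_ideal_J])
  moreover have "J 0 = UNIV" using zeta_mem_J(1)[of 0] by (simp add: ideal_eq_UNIV[OF is_ideal_J])
  ultimately show ?thesis using True by simp
next
  case False
  let ?K = "J (2 * h + 1)" and ?z = "zeta (2 * h)"
  let ?roots = "map (\<lambda>x. [:complex_of_real x:]) (odd_roots h)"
  define u where "u = alpha_poly ([:0, 1:] * snd (descent_pair (2 * h) h) - fst (descent_pair (2 * h) h))"
  have "u \<in> {y. ?z * y \<in> ?K}"
    using zeta_mult_descent_residue_mem_J_Suc[of h] by (simp add: u_def)
  moreover have "\<forall>c\<in>set ?roots. poly u c dvd 1"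
    using poly_descent_residue_dvd_one[of _ h] by (auto simp: u_def)
  moreover have "prod_list (map (\<lambda>c. [:-c, 1:]) ?roots) * 1 \<in> {y. ?z * y \<in> ?K}"
    using zeta_mult_zeta_even_gamma0_mem_J_Suc False by (simp add: zeta_even_gamma0_def comp_def)
  ultimately have "1 \<in> {y. ?z * y \<in> ?K}"
    by (rule ideal_cancel_linear_factors[OF is_ideal_quotient[OF is_ideal_J]])
  then have "?z \<in> ?K" by simp
  then have "J (2 * h) \<subseteq> ?K"
    using zeta_mem_J[of "2 * h + 1"] by (intro J_subset[OF is_ideal_J]) (simp_all add: eval_nat_numeral)
  with J_Suc_subset[of "2 * h"] show ?thesis by auto
qed

theorem proposition5p6:
  fixes g :: nat
  assumes "even g"
  shows "J g = J (g + 1)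
    \<and> is_groebner_basis {gamma ^ i * zeta (g - 2 * i) | i. i \<le> g div 2} (J g)
    \<and> initial_ideal (J g) = gen_ideal {mon (g - 2 * i) i | i. i \<le> g div 2}
    \<and> (\<forall>p. \<exists>!r :: nat \<times> nat \<Rightarrow> complex.
          (\<forall>x. x \<notin> {(a, c). c < g div 2 \<and> a < g - 2 * c} \<longrightarrow> r x = 0)
          \<and> p - (\<Sum>(a, c)\<in>{(a, c). c < g div 2 \<and> a < g - 2 * c}. monom (monom (r (a, c)) c) a)
              \<in> J g)"
proof -
  obtain h where g: "g = 2 * h" using assms by (elim evenE)
  have half: "g div 2 = h" using g by simp
  have staircase: "{(a, c). c < g div 2 \<and> a < g - 2 * c} = staircase h"
    by (auto simp: half g staircase_def)
  have J: "J g = stair_ideal h" by (simp add: g J_eq_stair_ideal)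
  have "\<forall>p. \<exists>!r :: nat \<times> nat \<Rightarrow> complex.
          (\<forall>x. x \<notin> {(a, c). c < g div 2 \<and> a < g - 2 * c} \<longrightarrow> r x = 0)
          \<and> p - (\<Sum>(a, c)\<in>{(a, c). c < g div 2 \<and> a < g - 2 * c}. monom (monom (r (a, c)) c) a)
              \<in> J g"
    unfolding staircase J using staircase_normal_form by (simp add: staircase_poly_def)
  moreover have "J g = J (g + 1)" using J_even_eq_J_Suc[of h] by (simp add: g)
  moreover have "is_groebner_basis {gamma ^ i * zeta (g - 2 * i) | i. i \<le> g div 2} (J g)"
    unfolding J half unfolding g by (rule groebner_basis_stair_ideal)
  moreover have "initial_ideal (J g) = gen_ideal {mon (g - 2 * i) i | i. i \<le> g div 2}"
    unfolding J half unfolding g by (rule initial_ideal_stair_ideal)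
  ultimately show ?thesis by blast
qed

end
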